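(* Let $H$ be a bipartite graph with bipartition $(V_1,V_2)$, $n$ vertices and $m$ edges, such that there are $r\ge1$ vertices $u_1,\ldots,u_r\in V_1$ each adjacent to all vertices of $V_2$, and every vertex of $V_1$ has degree at least $d$, where $d\ge1$ is an integer. Then for every graph $G$, $$t_{H}(G) \geq (2n)^{-2n^2}\,t_{K_{r,d}}(G)^{\frac{m}{rd}}.$$
   Context: All graphs are finite and simple. A homomorphism from $F$ to $G$ is a map $V(F)\to V(G)$ sending edges to edges; $h_F(G)$ is the number of homomorphisms and $t_F(G)=h_F(G)/|V(G)|^{|V(F)|}$. $K_{r,d}$ is the complete bipartite graph with parts of sizes $r$ and $d$. *)

theory Defs
  imports Complex_Main "HOL-Library.FuncSet"
begin

definition simple_graph :: "'a set \<Rightarrow> ('a \<Rightarrow> 'a \<Rightarrow> bool) \<Rightarrow> bool" where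
  "simple_graph V E \<longleftrightarrow> finite V \<and> (\<forall>x y. E x y \<longrightarrow> x \<in> V \<and> y \<in> V)
     \<and> (\<forall>x y. E x y \<longrightarrow> E y x) \<and> (\<forall>x. \<not> E x x)"

definition homs :: "'a set \<Rightarrow> ('a \<Rightarrow> 'a \<Rightarrow> bool) \<Rightarrow> 'b set \<Rightarrow> ('b \<Rightarrow> 'b \<Rightarrow> bool) \<Rightarrow> ('a \<Rightarrow> 'b) set" where
  "homs VF EF VG EG = {f \<in> VF \<rightarrow>\<^sub>E VG. \<forall>x y. EF x y \<longrightarrow> EG (f x) (f y)}"

definition hom_count :: "'a set \<Rightarrow> ('a \<Rightarrow> 'a \<Rightarrow> bool) \<Rightarrow> 'b set \<Rightarrow> ('b \<Rightarrow> 'b \<Rightarrow> bool) \<Rightarrow> nat" where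
  "hom_count VF EF VG EG = card (homs VF EF VG EG)"

definition hom_density :: "'a set \<Rightarrow> ('a \<Rightarrow> 'a \<Rightarrow> bool) \<Rightarrow> 'b set \<Rightarrow> ('b \<Rightarrow> 'b \<Rightarrow> bool) \<Rightarrow> real" where
  "hom_density VF EF VG EG = real (hom_count VF EF VG EG) / real (card VG) ^ card VF"

definition edge_set :: "('a \<Rightarrow> 'a \<Rightarrow> bool) \<Rightarrow> 'a set set" where
  "edge_set E = {{x, y} | x y. E x y}"

definition degree :: "('a \<Rightarrow> 'a \<Rightarrow> bool) \<Rightarrow> 'a \<Rightarrow> nat" where
  "degree E x = card {y. E x y}"

definition Kbip_V :: "nat \<Rightarrow> nat \<Rightarrow> (nat + nat) set" where
  "Kbip_V r d = Inl ` {..<r} \<union> Inr ` {..<d}"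

definition Kbip_E :: "nat \<Rightarrow> nat \<Rightarrow> (nat + nat) \<Rightarrow> (nat + nat) \<Rightarrow> bool" where
  "Kbip_E r d x y \<longleftrightarrow> (\<exists>i<r. \<exists>j<d. (x = Inl i \<and> y = Inr j) \<or> (x = Inr j \<and> y = Inl i))"

end

theory Submission
  imports Defs
begin

text \<open>
  Write \<open>x\<close> for an \<open>r\<close>-tuple of vertices of \<open>G\<close> (the image of \<open>U\<close>) and \<open>C(x)\<close> for its
  common neighbourhood, so that \<open>hom(K\<^sub>r\<^sub>,\<^sub>d, G) \<le> \<Sum>\<^sub>x |C(x)|\<^sup>d\<close>. Every map
  \<open>\<phi> : V\<^sub>2 \<rightarrow> C(x)\<close> extends over \<open>U\<close> by \<open>x\<close> and over each \<open>v \<in> V\<^sub>1 - U\<close> in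
  \<open>|C(\<phi>(N(v)))|\<close> ways. Call \<open>\<phi>\<close> bad at \<open>v\<close> if \<open>|C(\<phi>(N(v)))|\<^sup>r\<close> lies below a threshold;
  counting the pairs \<open>(x, \<phi>|\<^bsub>N(v)\<^esub>)\<close> through the tuples inside \<open>C(\<phi>(N(v)))\<close> shows that
  bad maps are rare as long as all \<open>|C(x)|\<close> are at most \<open>2\<gamma>|G|\<close>. On a dyadic band
  \<open>\<gamma>|G| < |C(x)| \<le> 2\<gamma>|G|\<close> the good maps then give
  \<open>t\<^sub>H \<gtrsim> \<gamma>\<^bsup>|V\<^sub>2|-d+\<Sigma>\<^sub>v(deg v - d)/r\<^esup> e\<^bsup>1+|V\<^sub>1-U|/r\<^esup>\<close>, where \<open>e\<close> is the
  \<open>d\<close>-th moment of the band, and a weighted pigeonhole over the bands trades the power of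
  \<open>\<gamma>\<close> for a power of the full moment \<open>\<mu> \<ge> t(K\<^sub>r\<^sub>,\<^sub>d, G)\<close>, with exactly the exponent
  \<open>m/(rd)\<close>. All constants lost on the way are at least \<open>(2n)\<^bsup>-2n\<^sup>2\<^esup>\<close>.
\<close>

lemma card_PiE_filter_restrict:
  assumes "finite A" "S \<subseteq> A"
  shows "card {\<phi> \<in> A \<rightarrow>\<^sub>E F. Q (restrict \<phi> S)} = card {\<psi> \<in> S \<rightarrow>\<^sub>E F. Q \<psi>} * card F ^ card (A - S)"
proof -
  let ?B = "{\<psi> \<in> S \<rightarrow>\<^sub>E F. Q \<psi>}" and ?C = "(A - S) \<rightarrow>\<^sub>E F"
  let ?merge = "\<lambda>(\<psi>, \<chi>) w. if w \<in> S then \<psi> w else \<chi> w"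
  have "inj_on ?merge (?B \<times> ?C)"
  proof (rule inj_onI)
    fix p q assume mem: "p \<in> ?B \<times> ?C" "q \<in> ?B \<times> ?C" and eq: "?merge p = ?merge q"
    have "fst p w = fst q w \<and> snd p w = snd q w" for w
      using mem fun_cong[OF eq, of w]
      by (cases p, cases q, cases "w \<in> S") (auto simp: PiE_def extensional_def)
    then show "p = q" by (simp add: prod_eq_iff fun_eq_iff)
  qed
  moreover have "?merge ` (?B \<times> ?C) = {\<phi> \<in> A \<rightarrow>\<^sub>E F. Q (restrict \<phi> S)}"
  proof (intro equalityI subsetI)
    fix \<phi> assume "\<phi> \<in> ?merge ` (?B \<times> ?C)"
    then obtain \<psi> \<chi> where mem: "\<psi> \<in> ?B" "\<chi> \<in> ?C" and \<phi>: "\<phi> = ?merge (\<psi>, \<chi>)" by auto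
    have "restrict \<phi> S = \<psi>"
      using mem by (auto simp: \<phi> restrict_def PiE_def extensional_def)
    moreover have "\<phi> \<in> A \<rightarrow>\<^sub>E F"
      using mem assms(2) by (auto simp: \<phi> PiE_def Pi_def extensional_def)
    ultimately show "\<phi> \<in> {\<phi> \<in> A \<rightarrow>\<^sub>E F. Q (restrict \<phi> S)}" using mem by simp
  next
    fix \<phi> assume \<phi>: "\<phi> \<in> {\<phi> \<in> A \<rightarrow>\<^sub>E F. Q (restrict \<phi> S)}"
    then have "\<phi> = ?merge (restrict \<phi> S, restrict \<phi> (A - S))"
      by (auto simp: restrict_def PiE_def extensional_def)
    moreover have "(restrict \<phi> S, restrict \<phi> (A - S)) \<in> ?B \<times> ?C"
      using \<phi> assms(2) by (auto simp: PiE_def Pi_def)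
    ultimately show "\<phi> \<in> ?merge ` (?B \<times> ?C)" by blast
  qed
  ultimately have "card {\<phi> \<in> A \<rightarrow>\<^sub>E F. Q (restrict \<phi> S)} = card (?B \<times> ?C)"
    using card_image by fastforce
  also have "\<dots> = card ?B * card F ^ card (A - S)"
    using assms by (simp add: card_cartesian_product card_PiE)
  finally show ?thesis .
qed

lemma sum_card_filter_swap:
  assumes "finite A" "finite B"
  shows "(\<Sum>a\<in>A. card {b\<in>B. R a b}) = (\<Sum>b\<in>B. card {a\<in>A. R a b})"
proof -
  have "(\<Sum>a\<in>A. card {b\<in>B. R a b}) = (\<Sum>a\<in>A. \<Sum>b\<in>B. if R a b then 1 else 0)"
    using assms sum.inter_filter[of B "\<lambda>_. 1::nat"] by simp
  also have "\<dots> = (\<Sum>b\<in>B. \<Sum>a\<in>A. if R a b then 1 else 0)" by (rule sum.swap)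
  also have "\<dots> = (\<Sum>b\<in>B. card {a\<in>A. R a b})"
    using assms sum.inter_filter[of A "\<lambda>_. 1::nat"] by simp
  finally show ?thesis .
qed

lemma exists_le_of_sum_le:
  fixes f g :: "'i \<Rightarrow> real"
  assumes "finite I" "I \<noteq> {}" "sum f I \<le> sum g I"
  shows "\<exists>i\<in>I. f i \<le> g i"
  using sum_strict_mono[of I g f] assms by force

lemma powr_minus_le_of_le_powr:
  fixes T x c e e' :: real
  assumes "0 < T" "1 \<le> x" "x \<le> T powr c" "0 \<le> e" "e \<le> e'"
  shows "T powr (- (c * e')) \<le> x powr (- e)"
proof -
  have "x powr e \<le> x powr e'" using assms by (intro powr_mono) auto
  also have "\<dots> \<le> (T powr c) powr e'" using assms by (intro powr_mono2) auto
  finally have "x powr e \<le> T powr (c * e')" by (simp add: powr_powr)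
  then show ?thesis using assms by (simp add: powr_minus_divide frac_le)
qed

lemma root_le_of_le_power:
  fixes P Q :: real
  assumes "n \<ge> 1" "0 \<le> P" "0 \<le> Q" "Q \<le> P ^ n"
  shows "Q powr (1 / real n) \<le> P"
proof (cases "P = 0")
  case True
  then show ?thesis using assms by (simp add: power_0_left)
next
  case False
  have "Q powr (1 / real n) \<le> (P ^ n) powr (1 / real n)"
    using assms by (intro powr_mono2) auto
  also have "\<dots> = P"
    using False assms by (simp add: powr_realpow[symmetric] powr_powr)
  finally show ?thesis .
qed

lemma Bernoulli_half_le:
  assumes "a \<ge> (1::nat)"
  shows "1 / 2 \<le> (1 - 1 / (2 * real a)) ^ a"
proof -
  have "1 + real a * (- 1 / (2 * real a)) \<le> (1 + (- 1 / (2 * real a))) ^ a"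
    using assms by (intro Bernoulli_inequality) (auto simp: field_simps)
  then show ?thesis using assms by (simp add: field_simps)
qed

lemma geometric_sum_atMost_le:
  fixes \<rho> :: real
  assumes "0 \<le> \<rho>" "\<rho> < 1"
  shows "(\<Sum>i\<le>J. \<rho> ^ i) \<le> 1 / (1 - \<rho>)"
proof -
  have "(\<Sum>i\<le>J. \<rho> ^ i) = (1 - \<rho> ^ Suc J) / (1 - \<rho>)"
    using assms by (simp only: lessThan_Suc_atMost[symmetric] sum_gp_strict) simp
  also have "\<dots> \<le> 1 / (1 - \<rho>)"
    using assms by (intro divide_right_mono) auto
  finally show ?thesis .
qed

lemma exists_power_bracket:
  fixes y \<epsilon> :: real
  assumes "0 < y" "y < 1" "0 < \<epsilon>" "\<epsilon> < 1"
  shows "\<exists>J. y ^ (J + 1) \<le> \<epsilon> \<and> \<epsilon> < y ^ J"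
proof -
  obtain n where "y ^ n < \<epsilon>" using real_arch_pow_inv assms by blast
  moreover have "y ^ (n + 1) \<le> y ^ n"
    using assms by (intro power_decreasing) auto
  ultimately have ex: "y ^ (n + 1) \<le> \<epsilon>" by simp
  define J where "J = (LEAST J. y ^ (J + 1) \<le> \<epsilon>)"
  have "y ^ (J + 1) \<le> \<epsilon>" unfolding J_def using ex by (rule LeastI)
  moreover have "\<epsilon> < y ^ J"
  proof (cases J)
    case (Suc J')
    then show ?thesis using not_less_Least[of J' "\<lambda>J. y ^ (J + 1) \<le> \<epsilon>"] by (simp add: J_def)
  qed (use assms in simp)
  ultimately show ?thesis by blast
qed

lemma sum_dyadic_bands:
  fixes c f :: real
  assumes "c \<le> 1"
  shows "(\<Sum>j\<le>J. if (1/2)^(j+1) < c \<and> c \<le> 2 * (1/2)^(j+1) then f else 0)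
       = (if (1/2)^(J+1) < c then f else 0)"
proof (induction J)
  case (Suc J)
  have h: "2 * (1/2::real)^(Suc J + 1) = (1/2)^(J+1)" and m: "(1/2::real)^(Suc J + 1) < (1/2)^(J+1)"
    by simp_all
  show ?case
  proof (cases "(1/2::real)^(J+1) < c")
    case True
    then have "\<not> c \<le> 2 * (1/2::real)^(Suc J + 1)" "(1/2::real)^(Suc J + 1) < c"
      using h m by linarith+
    then show ?thesis using Suc.IH True by simp
  next
    case False
    then have "c \<le> 2 * (1/2::real)^(Suc J + 1)" using h by linarith
    then show ?thesis using Suc.IH False by simp
  qed
qed (use assms in auto)

lemma scaled_powr_le_of_le_power:
  fixes x \<mu> B :: real
  assumes x: "0 < x" and \<mu>: "0 \<le> \<mu>" and d: "d \<ge> 1" and B: "0 \<le> B"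
    and le: "\<mu> / 2 ^ (d + 1) \<le> x ^ d"
  shows "2 powr (- (real d + 1) * B / real d) * \<mu> powr (B / real d) \<le> x powr B"
proof -
  have "(\<mu> / 2 ^ (d + 1)) powr (1 / real d) \<le> x"
    using assms by (intro root_le_of_le_power) auto
  then have "((\<mu> / 2 ^ (d + 1)) powr (1 / real d)) powr B \<le> x powr B"
    using B by (intro powr_mono2) auto
  moreover have "(2::real) ^ (d + 1) = 2 powr (real d + 1)"
    using powr_realpow[of 2 "d + 1"] by (simp add: add.commute)
  then have "((\<mu> / 2 ^ (d + 1)) powr (1 / real d)) powr B
      = \<mu> powr (B / real d) / 2 powr ((real d + 1) * B / real d)"
    by (simp add: powr_powr powr_divide \<mu>)
  moreover have "2 powr (- (real d + 1) * B / real d) = 1 / 2 powr ((real d + 1) * B / real d)"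
    using powr_minus_divide[of 2 "(real d + 1) * B / real d"]
    by (simp only: minus_divide_left mult_minus_left)
  ultimately show ?thesis by simp
qed

definition band_mass :: "'x set \<Rightarrow> ('x \<Rightarrow> real) \<Rightarrow> nat \<Rightarrow> real \<Rightarrow> real" where
  "band_mass X c d \<gamma> = (\<Sum>x\<in>{x\<in>X. \<gamma> < c x \<and> c x \<le> 2 * \<gamma>}. c x ^ d) / card X"

lemma sum_band_mass_dyadic:
  fixes c :: "'x \<Rightarrow> real"
  assumes X: "finite X" and c: "\<And>x. x \<in> X \<Longrightarrow> c x \<le> 1"
  shows "(\<Sum>j\<le>J. band_mass X c d ((1/2) ^ (j + 1)))
    = (\<Sum>x\<in>X. if (1/2) ^ (J + 1) < c x then c x ^ d else 0) / card X"
proof -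
  have "(\<Sum>j\<le>J. band_mass X c d ((1/2) ^ (j + 1)))
      = (\<Sum>j\<le>J. \<Sum>x\<in>X. if (1/2)^(j+1) < c x \<and> c x \<le> 2 * (1/2)^(j+1) then c x ^ d else 0) / card X"
    using X by (simp add: band_mass_def sum.inter_filter sum_divide_distrib)
  also have "\<dots> = (\<Sum>x\<in>X. \<Sum>j\<le>J. if (1/2)^(j+1) < c x \<and> c x \<le> 2 * (1/2)^(j+1) then c x ^ d else 0) / card X"
    by (subst sum.swap) (rule refl)
  also have "\<dots> = (\<Sum>x\<in>X. if (1/2) ^ (J + 1) < c x then c x ^ d else 0) / card X"
    using c by (intro arg_cong2[where f = "(/)"] sum.cong refl sum_dyadic_bands) auto
  finally show ?thesis .
qed

lemma dyadic_level_exists: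
  fixes c :: "'x \<Rightarrow> real"
  assumes X: "finite X" and c: "\<And>x. x \<in> X \<Longrightarrow> 0 \<le> c x \<and> c x \<le> 1" and d: "d \<ge> 1"
    and \<mu>: "\<mu> = (\<Sum>x\<in>X. c x ^ d) / card X" "\<mu> > 0"
  shows "\<exists>J. \<mu> / 2 ^ (d + 1) \<le> ((1/2) ^ (J + 1)) ^ d
    \<and> \<mu> / 2 \<le> (\<Sum>j\<le>J. band_mass X c d ((1/2) ^ (j + 1)))"
proof -
  define y :: real where "y = (1/2) ^ d"
  have cardX: "real (card X) > 0" using \<mu> X by (auto simp: card_gt_0_iff)
  have "(\<Sum>x\<in>X. c x ^ d) \<le> (\<Sum>x\<in>X. 1)"
    using c by (intro sum_mono power_le_one) auto
  then have "\<mu> \<le> 1" using cardX by (simp add: \<mu>)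
  moreover have "0 < y" "y < 1" using d by (auto simp: y_def power_less_one_iff)
  ultimately obtain J where J: "y ^ (J + 1) \<le> \<mu> / 2" "\<mu> / 2 < y ^ J"
    using exists_power_bracket[of y "\<mu> / 2"] \<mu> by auto
  define \<gamma> where "\<gamma> = (1/2::real) ^ (J + 1)"
  have \<gamma>d: "\<gamma> ^ d = y ^ (J + 1)"
    unfolding \<gamma>_def y_def by (simp only: power_mult[symmetric] mult.commute)
  then have \<gamma>y: "\<gamma> ^ d = y * y ^ J" by simp
  have "\<mu> / 2 ^ (d + 1) = y * (\<mu> / 2)" by (simp add: y_def power_one_over)
  also have "\<dots> \<le> \<gamma> ^ d"
    unfolding \<gamma>y using J(2) \<open>0 < y\<close> by (intro mult_left_mono) auto
  finally have level: "\<mu> / 2 ^ (d + 1) \<le> \<gamma> ^ d" .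
  define high where "high = (\<Sum>x\<in>X. if \<gamma> < c x then c x ^ d else 0)"
  define low where "low = (\<Sum>x\<in>X. if \<gamma> < c x then 0 else c x ^ d)"
  have bands: "(\<Sum>j\<le>J. band_mass X c d ((1/2) ^ (j + 1))) = high / card X"
    unfolding high_def \<gamma>_def using X c by (intro sum_band_mass_dyadic) auto
  have "low \<le> (\<Sum>x\<in>X. \<gamma> ^ d)"
    unfolding low_def using c by (intro sum_mono) (auto intro: power_mono simp: \<gamma>_def)
  also have "\<dots> \<le> card X * (\<mu> / 2)"
    using J(1) cardX by (simp add: \<gamma>d)
  finally have "low / card X \<le> \<mu> / 2"
    using cardX by (simp add: divide_le_eq mult.commute)
  moreover have "\<mu> = high / card X + low / card X"
    by (simp add: \<mu> high_def low_def add_divide_distrib[symmetric] sum.distrib[symmetric] if_distrib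
        cong: if_cong)
  ultimately have "\<mu> / 2 \<le> (\<Sum>j\<le>J. band_mass X c d ((1/2) ^ (j + 1)))"
    unfolding bands by linarith
  with level show ?thesis unfolding \<gamma>_def by blast
qed

lemma one_le_doubling_powr:
  fixes \<rho> t B :: real and a i :: nat
  assumes \<rho>: "0 < \<rho>" "1 / 2 \<le> \<rho> ^ a" and t: "0 < t" "t \<le> B"
  shows "1 \<le> (2 ^ i) powr B * (\<rho> ^ i) powr (a * t)"
proof -
  have "(2::real) powr t * (1/2) powr t \<le> 2 powr B * (\<rho> ^ a) powr t"
    using t \<rho> by (intro mult_mono powr_mono powr_mono2) auto
  then have "1 \<le> 2 powr B * \<rho> powr (a * t)"
    using \<rho> by (simp add: powr_mult[symmetric] powr_realpow[symmetric] powr_powr)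
  then have "1 \<le> (2 powr B * \<rho> powr (a * t)) ^ i" by (rule one_le_power)
  then show ?thesis using \<rho> by (simp add: power_mult_distrib powr_realpow[symmetric] powr_powr mult.commute)
qed

lemma sum_Bernoulli_weights_le:
  fixes \<mu> :: real
  assumes a: "a \<ge> 1" and \<mu>: "0 \<le> \<mu>"
  shows "(\<Sum>j\<le>J. (1 - 1 / (2 * real a)) ^ (J - j) * \<mu> / (4 * a)) \<le> \<mu> / 2"
proof -
  define \<rho> where "\<rho> = 1 - 1 / (2 * real a)"
  have \<rho>: "0 \<le> \<rho>" "\<rho> < 1" using a by (auto simp: \<rho>_def field_simps)
  have "(\<Sum>j\<le>J. \<rho> ^ (J - j) * \<mu> / (4 * a)) = (\<Sum>i\<le>J. \<rho> ^ i) * \<mu> / (4 * a)"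
    by (simp add: sum_divide_distrib[symmetric] sum_distrib_right[symmetric] atMost_atLeast0
        sum.atLeastAtMost_rev[of "\<lambda>i. \<rho> ^ i" 0 J])
  also have "\<dots> \<le> 1 / (1 - \<rho>) * \<mu> / (4 * a)"
    using \<rho> \<mu> by (intro divide_right_mono mult_right_mono geometric_sum_atMost_le) auto
  also have "\<dots> = \<mu> / 2" using a by (simp add: \<rho>_def field_simps)
  finally show ?thesis by (simp add: \<rho>_def)
qed

lemma dyadic_pigeonhole:
  fixes c :: "'x \<Rightarrow> real" and a d :: nat and t B :: real
  assumes X: "finite X" and c: "\<And>x. x \<in> X \<Longrightarrow> 0 \<le> c x \<and> c x \<le> 1" and d: "d \<ge> 1"
    and \<mu>: "\<mu> = (\<Sum>x\<in>X. c x ^ d) / card X" "\<mu> > 0"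
    and a: "a \<ge> 1" and t: "0 < t" "t \<le> B"
  shows "\<exists>\<gamma>>0. 2 powr (- (real d + 1) * B / real d) * (1 / (4 * real a)) powr (a * t)
      * \<mu> powr (a * t + B / real d) \<le> \<gamma> powr B * band_mass X c d \<gamma> powr (a * t)"
proof -
  obtain J where level: "\<mu> / 2 ^ (d + 1) \<le> ((1/2) ^ (J + 1)) ^ d"
    and mass: "\<mu> / 2 \<le> (\<Sum>j\<le>J. band_mass X c d ((1/2) ^ (j + 1)))"
    using dyadic_level_exists[OF X c d \<mu>] by blast
  txt \<open>Band \<open>j\<close> gets weight \<open>\<rho>\<^bsup>J-j\<^esup>\<close>; the weights fit under the mass \<open>\<mu>/2\<close>, and the
    factor \<open>\<rho>\<^bsup>J-j\<^esup>\<close> lost in the band mass is paid back by \<open>\<gamma>\<^sub>j = 2\<^bsup>J-j\<^esup> \<gamma>\<^sub>J\<close>.\<close>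
  define \<rho> where "\<rho> = 1 - 1 / (2 * real a)"
  have \<rho>: "0 < \<rho>" "1/2 \<le> \<rho> ^ a"
    using a Bernoulli_half_le[OF a] by (auto simp: \<rho>_def field_simps)
  have "(\<Sum>j\<le>J. \<rho> ^ (J - j) * \<mu> / (4 * a)) \<le> \<mu> / 2"
    unfolding \<rho>_def using a \<mu>(2) by (intro sum_Bernoulli_weights_le) auto
  then have "(\<Sum>j\<le>J. \<rho> ^ (J - j) * \<mu> / (4 * a)) \<le> (\<Sum>j\<le>J. band_mass X c d ((1/2) ^ (j + 1)))"
    using mass by linarith
  then obtain j where j: "j \<le> J" "\<rho> ^ (J - j) * \<mu> / (4 * a) \<le> band_mass X c d ((1/2) ^ (j + 1))"
    using exists_le_of_sum_le[of "{..J}"] by blast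
  define i where "i = J - j"
  define \<gamma> where "\<gamma> = (1/2::real) ^ (j + 1)"
  have \<gamma>: "\<gamma> = (1/2) ^ (J + 1) * 2 ^ i"
    using j by (simp add: \<gamma>_def i_def power_add[symmetric] field_simps)
  have level_powr: "2 powr (- (real d + 1) * B / real d) * \<mu> powr (B / d) \<le> ((1/2::real) ^ (J + 1)) powr B"
    using level \<mu>(2) d t by (intro scaled_powr_le_of_le_power) auto
  have growth: "1 \<le> (2 ^ i) powr B * (\<rho> ^ i) powr (a * t)"
    using \<rho> t by (intro one_le_doubling_powr) auto
  have band: "(\<rho> ^ i * \<mu> / (4 * a)) powr (a * t) \<le> band_mass X c d \<gamma> powr (a * t)"
    using j \<rho> \<mu>(2) t by (intro powr_mono2) (auto simp: i_def \<gamma>_def)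
  let ?K = "(1 / (4 * real a)) powr (a * t) * \<mu> powr (a * t)"
  have "2 powr (- (real d + 1) * B / real d) * (1 / (4 * real a)) powr (a * t) * \<mu> powr (a * t + B / d)
      = 2 powr (- (real d + 1) * B / real d) * \<mu> powr (B / d) * ?K"
    by (simp add: powr_add mult_ac)
  also have "\<dots> \<le> ((1/2) ^ (J + 1)) powr B * ?K"
    using level_powr by (rule mult_right_mono) simp
  also have "\<dots> \<le> ((1/2) ^ (J + 1)) powr B * ((2 ^ i) powr B * (\<rho> ^ i) powr (a * t)) * ?K"
    using growth by (intro mult_right_mono) auto
  also have "\<dots> = \<gamma> powr B * (\<rho> ^ i * \<mu> / (4 * a)) powr (a * t)"
    using \<rho> \<mu>(2) by (simp add: \<gamma> powr_mult powr_divide)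
  also have "\<dots> \<le> \<gamma> powr B * band_mass X c d \<gamma> powr (a * t)"
    using band by (rule mult_left_mono) simp
  finally show ?thesis by (intro exI[of _ \<gamma>]) (simp add: \<gamma>_def)
qed

lemma exponent_budget:
  fixes r w s :: nat and B :: real
  assumes r: "r \<ge> 1" and s: "s \<ge> 1" and B: "B \<le> real s + real w * real s"
  shows "1 + real ((s + 1) * w) + 2 * B + 2 * real (r + w) \<le> 2 * real (r + w + s) ^ 2"
proof -
  have "1 \<le> r * s" using r s by (simp add: Suc_le_eq)
  then have "1 \<le> real r * real s" by (metis of_nat_1 of_nat_le_iff of_nat_mult)
  moreover have "real w \<le> real w * real s" "real w \<le> real r * real w"
    "real r \<le> real r * real r" "real s \<le> real s * real s"
    using r s by (simp_all add: mult_le_cancel_left1 mult_le_cancel_right1)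
  moreover have "0 \<le> real w * real w" "0 \<le> real w" by simp_all
  moreover have "real (r + w + s) ^ 2 = real r * real r + real w * real w + real s * real s
      + 2 * (real r * real w) + 2 * (real r * real s) + 2 * (real w * real s)"
    by (simp add: power2_eq_square algebra_simps)
  moreover have "real ((s + 1) * w) = real w * real s + real w" by (simp add: algebra_simps)
  ultimately show ?thesis using B by (simp only: of_nat_add) argo
qed

lemma constant_bound:
  fixes r w s d :: nat and B :: real
  assumes r: "r \<ge> 1" and s: "s \<ge> 1" and d: "d \<ge> 1"
    and B: "0 \<le> B" "B \<le> real s + real w * real s"
  shows "(2 * real (r + w + s)) powr (- (2 * real (r + w + s) ^ 2)) \<le>
    1 / 2 * (2 * (real w + 1) * 2 ^ s) powr (- (real w / real r))
    * (2 powr (- (real d + 1) * B / real d) * (1 / (4 * real (r + w))) powr (real (r + w) / real r))"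
proof -
  define T where "T = 2 * real (r + w + s)"
  define M :: real where "M = 2 * (real w + 1) * 2 ^ s"
  define a where "a = real (r + w)"
  have T: "2 \<le> T" using r by (simp add: T_def)
  have M: "1 \<le> M"
    using mult_mono[of 1 "2 * (real w + 1)" 1 "2 ^ s"] by (simp add: M_def)
  have le_div: "x / real r \<le> x" if "0 \<le> x" for x
    using r that by (simp add: divide_le_eq mult_le_cancel_left1)
  have f1: "T powr (- 1) \<le> 1 / 2"
    using powr_minus_le_of_le_powr[of T 2 1 1 1] T by (simp add: powr_minus_divide)
  have "M \<le> T * T ^ s"
    unfolding M_def using T r by (intro mult_mono power_mono) (auto simp: T_def)
  then have f2: "T powr (- (real (s + 1) * real w)) \<le> M powr (- (real w / real r))"
    using T M le_div powr_realpow[of T "s + 1"] by (intro powr_minus_le_of_le_powr) auto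
  have "(real d + 1) * B / real d \<le> 2 * B"
    using d B by (simp add: divide_le_eq algebra_simps mult_le_cancel_left1)
  then have "T powr (- (1 * (2 * B))) \<le> 2 powr (- ((real d + 1) * B / real d))"
    using T B d by (intro powr_minus_le_of_le_powr) auto
  then have "T powr (- (2 * B)) \<le> 2 powr (- ((real d + 1) * B / real d))" by simp
  moreover have "- (real d + 1) * B / real d = - ((real d + 1) * B / real d)"
    by (simp only: mult_minus_left minus_divide_left)
  ultimately have f3: "T powr (- (2 * B)) \<le> 2 powr (- (real d + 1) * B / real d)" by simp
  have "4 * a \<le> 2 * T" by (simp add: T_def a_def)
  also have "\<dots> \<le> T powr 2"
    using T mult_right_mono[of 2 T T] by (simp add: power2_eq_square)
  finally have "T powr (- (2 * a)) \<le> (4 * a) powr (- (a / real r))"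
    using T r le_div by (intro powr_minus_le_of_le_powr) (auto simp: a_def)
  also have "\<dots> = (1 / (4 * a)) powr (a / real r)"
    using r by (simp add: powr_minus_divide powr_divide a_def)
  finally have f4: "T powr (- (2 * a)) \<le> (1 / (4 * a)) powr (a / real r)" .
  have "T powr (- (2 * real (r + w + s) ^ 2))
      \<le> T powr (- (1 + real ((s + 1) * w) + 2 * B + 2 * a))"
    using exponent_budget[OF r s B(2)] T by (intro powr_mono) (auto simp: a_def)
  also have "\<dots> = T powr (- 1 + - (real (s + 1) * real w) + (- (2 * B) + - (2 * a)))"
    by (simp add: algebra_simps)
  also have "\<dots> = T powr (- 1) * T powr (- (real (s + 1) * real w)) * (T powr (- (2 * B)) * T powr (- (2 * a)))"
    by (simp only: powr_add)
  also have "\<dots> \<le> 1 / 2 * M powr (- (real w / real r))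
      * (2 powr (- (real d + 1) * B / real d) * (1 / (4 * a)) powr (a / real r))"
    using f1 f2 f3 f4 by (intro mult_mono) auto
  finally show ?thesis by (simp add: T_def M_def a_def)
qed

lemma band_bound_normalise:
  fixes N \<gamma> e M :: real and r w s d K :: nat
  assumes N: "N > 0" and \<gamma>: "\<gamma> > 0" and e: "e > 0" and M: "M > 0" and r: "r \<ge> 1" and ds: "d \<le> s"
  shows "(\<gamma> * N) ^ (s - d) * N ^ (r + d) * e / 2 * ((N ^ r * e / M) ^ w * \<gamma> ^ K) powr (1 / r)
      / N ^ (r + w + s)
    = 1 / 2 * M powr (- (w / r)) * \<gamma> powr (real (s - d) + K / r) * e powr (1 + w / r)"
proof -
  have "((N ^ r * e / M) ^ w * \<gamma> ^ K) powr (1 / r) = N ^ w * (e / M) powr (w / r) * \<gamma> powr (K / r)"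
  proof -
    have "(N ^ r * e / M) ^ w = N ^ (r * w) * (e / M) ^ w"
      by (simp add: power_mult power_mult_distrib[symmetric] times_divide_eq_right[symmetric]
          del: times_divide_eq_right)
    moreover have "(N ^ (r * w)) powr (1 / r) = N ^ w"
      using N r by (simp add: powr_realpow[symmetric] powr_powr)
    moreover have "((e / M) ^ w) powr (1 / r) = (e / M) powr (w / r)"
      using e M by (simp add: powr_realpow[symmetric] powr_powr)
    moreover have "(\<gamma> ^ K) powr (1 / r) = \<gamma> powr (K / r)"
      using \<gamma> by (simp add: powr_realpow[symmetric] powr_powr)
    ultimately show ?thesis using N e M \<gamma> by (simp add: powr_mult)
  qed
  moreover have "\<gamma> powr (real (s - d) + K / r) = \<gamma> ^ (s - d) * \<gamma> powr (K / r)"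
    using \<gamma> by (simp add: powr_add powr_realpow)
  moreover have "e powr (1 + w / r) = e * e powr (w / r)"
    using e by (simp add: powr_add)
  moreover have "(e / M) powr (w / r) = e powr (w / r) * M powr (- (w / r))"
    using e M by (simp add: powr_divide powr_minus_divide)
  moreover have "r + w + s = (s - d) + (r + d) + w" using ds by simp
  moreover have "N ^ d * N ^ (s - d) = N ^ s" using ds by (simp flip: power_add)
  ultimately show ?thesis
    using N by (simp add: power_add field_simps)
qed

lemma card_Kbip_V: "card (Kbip_V r d) = r + d"
  unfolding Kbip_V_def by (subst card_Un_disjoint) (auto simp: card_image)

locale bipartite_complete_core =
  fixes V :: "'a set" and E :: "'a \<Rightarrow> 'a \<Rightarrow> bool"
    and V1 V2 U :: "'a set" and r d :: nat
    and VG :: "'b set" and EG :: "'b \<Rightarrow> 'b \<Rightarrow> bool"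
  assumes H: "simple_graph V E"
    and part: "V1 \<union> V2 = V" "V1 \<inter> V2 = {}"
    and bip: "\<And>x y. E x y \<Longrightarrow> (x \<in> V1 \<and> y \<in> V2) \<or> (x \<in> V2 \<and> y \<in> V1)"
    and r: "r \<ge> 1" and U: "U \<subseteq> V1" "card U = r"
    and Ucomplete: "\<And>u v. u \<in> U \<Longrightarrow> v \<in> V2 \<Longrightarrow> E u v"
    and d: "d \<ge> 1" and deg: "\<And>v. v \<in> V1 \<Longrightarrow> degree E v \<ge> d"
    and G: "simple_graph VG EG"
begin

definition nbhd :: "'a \<Rightarrow> 'a set" where
  "nbhd v = {y. E v y}"

definition common_nbhd :: "'b set \<Rightarrow> 'b set" where
  "common_nbhd T = {z\<in>VG. \<forall>t\<in>T. EG z t}"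

abbreviation "W \<equiv> V1 - U"
abbreviation "s \<equiv> card V2"
abbreviation "N \<equiv> card VG"
abbreviation "tuples \<equiv> {..<r} \<rightarrow>\<^sub>E VG"
abbreviation "C x \<equiv> common_nbhd (x ` {..<r})"

lemma finite_V: "finite V" using H by (simp add: simple_graph_def)
lemma finite_VG: "finite VG" using G by (simp add: simple_graph_def)
lemma finite_V1: "finite V1" using finite_V part by auto
lemma finite_V2: "finite V2" using finite_V part by auto
lemma finite_U: "finite U" using finite_V1 U finite_subset by auto
lemma finite_tuples: "finite tuples" using finite_VG by (simp add: finite_PiE)
lemma EG_sym: "EG x y \<Longrightarrow> EG y x" using G by (simp add: simple_graph_def)
lemma E_sym: "E x y \<Longrightarrow> E y x" using H by (simp add: simple_graph_def)
lemma common_nbhd_subset: "common_nbhd T \<subseteq> VG" by (auto simp: common_nbhd_def)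
lemma finite_common_nbhd: "finite (common_nbhd T)" using finite_VG common_nbhd_subset finite_subset by blast
lemma card_common_nbhd_le: "card (common_nbhd T) \<le> N" using finite_VG common_nbhd_subset card_mono by blast
lemma nbhd_subset: "v \<in> V1 \<Longrightarrow> nbhd v \<subseteq> V2" using bip part by (auto simp: nbhd_def)
lemma nbhd_U: "u \<in> U \<Longrightarrow> nbhd u = V2" using nbhd_subset U Ucomplete by (auto simp: nbhd_def)
lemma finite_nbhd: "v \<in> V1 \<Longrightarrow> finite (nbhd v)" using nbhd_subset finite_V2 finite_subset by blast
lemma card_nbhd: "card (nbhd v) = degree E v" by (simp add: degree_def nbhd_def)
lemma degree_le: "v \<in> V1 \<Longrightarrow> degree E v \<le> s" using nbhd_subset finite_V2 card_mono card_nbhd by metis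

lemma d_le_s: "d \<le> s"
proof -
  obtain u where "u \<in> U" using U r by fastforce
  then show ?thesis using deg degree_le U by (meson le_trans subsetD)
qed

lemma hom_count_Kbip_le: "hom_count (Kbip_V r d) (Kbip_E r d) VG EG \<le> (\<Sum>x\<in>tuples. card (C x) ^ d)"
proof -
  let ?K = "homs (Kbip_V r d) (Kbip_E r d) VG EG"
  let ?S = "SIGMA x:tuples. {..<d} \<rightarrow>\<^sub>E C x"
  let ?split = "\<lambda>f. (restrict (f \<circ> Inl) {..<r}, restrict (f \<circ> Inr) {..<d})"
  have "inj_on ?split ?K"
  proof (rule inj_onI)
    fix f g assume "f \<in> ?K" "g \<in> ?K" and eq: "?split f = ?split g"
    then have "f \<in> Kbip_V r d \<rightarrow>\<^sub>E VG" "g \<in> Kbip_V r d \<rightarrow>\<^sub>E VG" by (auto simp: homs_def)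
    moreover have "f (Inl i) = g (Inl i)" if "i < r" for i
      using fun_cong[OF arg_cong[OF eq, of fst], of i] that by simp
    moreover have "f (Inr j) = g (Inr j)" if "j < d" for j
      using fun_cong[OF arg_cong[OF eq, of snd], of j] that by simp
    ultimately show "f = g" by (intro PiE_ext) (auto simp: Kbip_V_def)
  qed
  moreover have "?split ` ?K \<subseteq> ?S"
    by (auto simp: homs_def Kbip_V_def Kbip_E_def common_nbhd_def)
  ultimately have "card ?K \<le> card ?S"
    using finite_VG finite_common_nbhd by (intro card_inj_on_le) (auto intro!: finite_PiE)
  also have "card ?S = (\<Sum>x\<in>tuples. card (C x) ^ d)"
    using finite_VG finite_common_nbhd by (simp add: card_PiE finite_PiE)
  finally show ?thesis by (simp add: hom_count_def)
qed

definition idx :: "'a \<Rightarrow> nat" where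
  "idx = (SOME b. bij_betw b U {..<r})"

lemma bij_idx: "bij_betw idx U {..<r}"
proof -
  have "\<exists>b. bij_betw b U {..<r}"
    using ex_bij_betw_finite_nat[OF finite_U] U(2) by (auto simp: atLeast0LessThan)
  then show ?thesis unfolding idx_def by (rule someI_ex)
qed

definition extend :: "(nat \<Rightarrow> 'b) \<Rightarrow> ('a \<Rightarrow> 'b) \<Rightarrow> ('a \<Rightarrow> 'b) \<Rightarrow> 'a \<Rightarrow> 'b" where
  "extend x \<phi> z w =
    (if w \<in> U then x (idx w) else if w \<in> V2 then \<phi> w else if w \<in> W then z w else undefined)"

abbreviation "extensions \<phi> \<equiv> \<Pi>\<^sub>E v\<in>W. common_nbhd (\<phi> ` nbhd v)"

lemma extend_in_homs:
  assumes x: "x \<in> tuples" and \<phi>: "\<phi> \<in> V2 \<rightarrow>\<^sub>E C x" and z: "z \<in> extensions \<phi>"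
  shows "extend x \<phi> z \<in> homs V E VG EG"
proof -
  have idx: "idx u < r" if "u \<in> U" for u using bij_idx that by (auto simp: bij_betw_def)
  have "extend x \<phi> z w \<in> VG" if "w \<in> V" for w
  proof -
    have "x (idx w) \<in> VG" if "w \<in> U" using x idx[OF that] by auto
    moreover have "\<phi> w \<in> VG" if "w \<in> V2" using \<phi> that common_nbhd_subset by auto
    moreover have "z w \<in> VG" if "w \<in> W" using z that common_nbhd_subset by auto
    ultimately show ?thesis using \<open>w \<in> V\<close> part(1) by (auto simp: extend_def)
  qed
  moreover have "extend x \<phi> z w = undefined" if "w \<notin> V" for w
    using that part(1) U(1) by (auto simp: extend_def)
  ultimately have "extend x \<phi> z \<in> V \<rightarrow>\<^sub>E VG" by auto
  moreover have edge: "EG (extend x \<phi> z a) (extend x \<phi> z c)" if "a \<in> V1" "c \<in> V2" "E a c" for a c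
  proof (cases "a \<in> U")
    case True
    then have "EG (\<phi> c) (x (idx a))" using \<phi> idx that by (auto simp: common_nbhd_def)
    then show ?thesis using True that part U(1) EG_sym by (auto simp: extend_def)
  next
    case False
    then have "EG (z a) (\<phi> c)" using z that by (auto simp: common_nbhd_def nbhd_def)
    then show ?thesis using False that part U by (auto simp: extend_def)
  qed
  have "EG (extend x \<phi> z a) (extend x \<phi> z c)" if "E a c" for a c
    using bip[OF that]
  proof
    assume "a \<in> V1 \<and> c \<in> V2" then show ?thesis using edge that by blast
  next
    assume "a \<in> V2 \<and> c \<in> V1" then show ?thesis using edge E_sym[OF that] EG_sym by blast
  qed
  ultimately show ?thesis by (simp add: homs_def)
qed

lemma inj_on_extend:
  "inj_on (\<lambda>(x, \<phi>, z). extend x \<phi> z) (SIGMA x:tuples. SIGMA \<phi>:V2 \<rightarrow>\<^sub>E C x. extensions \<phi>)"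
proof (rule inj_onI)
  fix p q
  assume p_mem: "p \<in> (SIGMA x:tuples. SIGMA \<phi>:V2 \<rightarrow>\<^sub>E C x. extensions \<phi>)"
    and q_mem: "q \<in> (SIGMA x:tuples. SIGMA \<phi>:V2 \<rightarrow>\<^sub>E C x. extensions \<phi>)"
    and pq: "(\<lambda>(x, \<phi>, z). extend x \<phi> z) p = (\<lambda>(x, \<phi>, z). extend x \<phi> z) q"
  obtain x \<phi> z x' \<phi>' z' where p: "p = (x, \<phi>, z)" and q: "q = (x', \<phi>', z')"
    by (metis prod_cases3)
  have mem: "x \<in> tuples" "\<phi> \<in> V2 \<rightarrow>\<^sub>E C x" "z \<in> extensions \<phi>"
    "x' \<in> tuples" "\<phi>' \<in> V2 \<rightarrow>\<^sub>E C x'" "z' \<in> extensions \<phi>'"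
    using p_mem q_mem unfolding p q by (simp_all only: mem_Sigma_iff)
  have eq: "extend x \<phi> z = extend x' \<phi>' z'"
    using pq unfolding p q by simp
  have ext: "x \<in> extensional {..<r}" "x' \<in> extensional {..<r}" "\<phi> \<in> extensional V2"
    "\<phi>' \<in> extensional V2" "z \<in> extensional W" "z' \<in> extensional W"
    using mem by (simp_all add: PiE_iff)
  have "x i = x' i" if "i < r" for i
  proof -
    have "i \<in> idx ` U" using bij_idx that by (simp add: bij_betw_def)
    then obtain u where "u \<in> U" "idx u = i" by blast
    then show ?thesis using fun_cong[OF eq, of u] by (simp add: extend_def)
  qed
  moreover have "\<phi> w = \<phi>' w" if "w \<in> V2" for w
  proof -
    have "w \<notin> U" using that part(2) U(1) by blast
    then show ?thesis using fun_cong[OF eq, of w] that by (simp add: extend_def)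
  qed
  moreover have "z w = z' w" if "w \<in> W" for w
  proof -
    have "w \<notin> U" "w \<notin> V2" using that part(2) by auto
    then show ?thesis using fun_cong[OF eq, of w] that by (simp add: extend_def)
  qed
  ultimately show "p = q"
    unfolding p q using ext by (auto intro: extensionalityI)
qed

lemma finite_homs: "finite (homs V E VG EG)"
proof -
  have "homs V E VG EG \<subseteq> V \<rightarrow>\<^sub>E VG" by (auto simp: homs_def)
  then show ?thesis using finite_V finite_VG by (meson finite_PiE finite_subset)
qed

lemma hom_count_ge_extensions:
  assumes X: "X \<subseteq> tuples" and \<Phi>: "\<And>x. x \<in> X \<Longrightarrow> \<Phi> x \<subseteq> V2 \<rightarrow>\<^sub>E C x"
  shows "(\<Sum>x\<in>X. \<Sum>\<phi>\<in>\<Phi> x. \<Prod>v\<in>W. card (common_nbhd (\<phi> ` nbhd v))) \<le> hom_count V E VG EG"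
proof -
  let ?T = "SIGMA x:X. SIGMA \<phi>:\<Phi> x. extensions \<phi>"
  have T: "?T \<subseteq> (SIGMA x:tuples. SIGMA \<phi>:V2 \<rightarrow>\<^sub>E C x. extensions \<phi>)" using X \<Phi> by (intro Sigma_mono) auto
  have "finite X" using X finite_tuples by (rule finite_subset)
  moreover have "finite (\<Phi> x)" if "x \<in> X" for x
    using \<Phi>[OF that] finite_V2 finite_common_nbhd by (metis finite_PiE finite_subset)
  moreover have "finite (extensions \<phi>)" for \<phi>
    using finite_V1 finite_common_nbhd by (simp add: finite_PiE)
  ultimately have "card ?T = (\<Sum>x\<in>X. \<Sum>\<phi>\<in>\<Phi> x. \<Prod>v\<in>W. card (common_nbhd (\<phi> ` nbhd v)))"
    using finite_V1 by (simp add: card_PiE)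
  moreover have "card ?T \<le> card (homs V E VG EG)"
  proof (rule card_inj_on_le)
    show "inj_on (\<lambda>(x, \<phi>, z). extend x \<phi> z) ?T" using inj_on_extend T by (rule inj_on_subset)
    show "(\<lambda>(x, \<phi>, z). extend x \<phi> z) ` ?T \<subseteq> homs V E VG EG"
    proof (rule image_subsetI)
      fix p assume "p \<in> ?T"
      then have "p \<in> (SIGMA x:tuples. SIGMA \<phi>:V2 \<rightarrow>\<^sub>E C x. extensions \<phi>)" using T by blast
      then show "(\<lambda>(x, \<phi>, z). extend x \<phi> z) p \<in> homs V E VG EG"
        by (cases p) (simp add: extend_in_homs)
    qed
    show "finite (homs V E VG EG)" by (rule finite_homs)
  qed
  ultimately show ?thesis by (simp add: hom_count_def)
qed

lemma sum_card_sparse_maps_le: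
  fixes S :: "'a set"
  assumes S: "finite S" and \<tau>: "0 \<le> \<tau>"
  shows "(\<Sum>x\<in>tuples. real (card {\<psi> \<in> S \<rightarrow>\<^sub>E C x. real (card (common_nbhd (\<psi> ` S))) ^ r < \<tau>}))
    \<le> real N ^ card S * \<tau>"
proof -
  define sparse where "sparse \<psi> \<longleftrightarrow> real (card (common_nbhd (\<psi> ` S))) ^ r < \<tau>" for \<psi> :: "'a \<Rightarrow> 'b"
  txt \<open>Double counting: \<open>\<psi>\<close> maps into \<open>C x\<close> iff \<open>x\<close> is a tuple in \<open>common_nbhd (\<psi> ` S)\<close>.\<close>
  define R where "R x \<psi> \<longleftrightarrow> (\<forall>i<r. \<forall>w\<in>S. EG (\<psi> w) (x i)) \<and> sparse \<psi>" for x \<psi>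
  have "{\<psi> \<in> S \<rightarrow>\<^sub>E C x. sparse \<psi>} = {\<psi> \<in> S \<rightarrow>\<^sub>E VG. R x \<psi>}" for x
    by (auto simp: R_def common_nbhd_def PiE_def Pi_def)
  then have "(\<Sum>x\<in>tuples. card {\<psi> \<in> S \<rightarrow>\<^sub>E C x. sparse \<psi>}) = (\<Sum>x\<in>tuples. card {\<psi> \<in> S \<rightarrow>\<^sub>E VG. R x \<psi>})"
    by simp
  also have "\<dots> = (\<Sum>\<psi>\<in>S \<rightarrow>\<^sub>E VG. card {x\<in>tuples. R x \<psi>})"
    using finite_VG S by (intro sum_card_filter_swap finite_tuples finite_PiE)
  finally have swap: "(\<Sum>x\<in>tuples. real (card {\<psi> \<in> S \<rightarrow>\<^sub>E C x. sparse \<psi>}))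
      = (\<Sum>\<psi>\<in>S \<rightarrow>\<^sub>E VG. real (card {x\<in>tuples. R x \<psi>}))"
    unfolding of_nat_sum[symmetric] by (rule arg_cong[where f = real])
  have "real (card {x\<in>tuples. R x \<psi>}) \<le> \<tau>" for \<psi>
  proof (cases "sparse \<psi>")
    case True
    then have "{x\<in>tuples. R x \<psi>} = {..<r} \<rightarrow>\<^sub>E common_nbhd (\<psi> ` S)"
      unfolding R_def common_nbhd_def by (auto simp: PiE_iff extensional_def intro: EG_sym)
    then show ?thesis using True by (simp add: card_PiE sparse_def)
  qed (simp add: R_def \<tau>)
  then have "(\<Sum>\<psi>\<in>S \<rightarrow>\<^sub>E VG. real (card {x\<in>tuples. R x \<psi>})) \<le> (\<Sum>\<psi>\<in>S \<rightarrow>\<^sub>E VG. \<tau>)"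
    by (rule sum_mono)
  also have "\<dots> = real N ^ card S * \<tau>"
    using S by (simp add: card_PiE)
  finally show ?thesis unfolding swap[unfolded sparse_def] .
qed

lemma sum_card_bad_maps_le:
  assumes X: "X \<subseteq> tuples" and v: "v \<in> V1" and \<tau>: "0 \<le> \<tau>"
    and \<Gamma>: "0 \<le> \<Gamma>" "\<And>x. x \<in> X \<Longrightarrow> real (card (C x)) \<le> \<Gamma>"
  shows "(\<Sum>x\<in>X. real (card {\<phi> \<in> V2 \<rightarrow>\<^sub>E C x. real (card (common_nbhd (\<phi> ` nbhd v))) ^ r < \<tau>}))
     \<le> \<Gamma> ^ (s - degree E v) * real N ^ degree E v * \<tau>"
proof -
  let ?sparse = "\<lambda>x. {\<psi> \<in> nbhd v \<rightarrow>\<^sub>E C x. real (card (common_nbhd (\<psi> ` nbhd v))) ^ r < \<tau>}"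
  have "real (card {\<phi> \<in> V2 \<rightarrow>\<^sub>E C x. real (card (common_nbhd (\<phi> ` nbhd v))) ^ r < \<tau>})
      \<le> \<Gamma> ^ (s - degree E v) * real (card (?sparse x))" if "x \<in> X" for x
  proof -
    have "card {\<phi> \<in> V2 \<rightarrow>\<^sub>E C x. real (card (common_nbhd (\<phi> ` nbhd v))) ^ r < \<tau>}
        = card (C x) ^ (s - degree E v) * card (?sparse x)"
      using card_PiE_filter_restrict[OF finite_V2 nbhd_subset[OF v],
          of "C x" "\<lambda>\<psi>. real (card (common_nbhd (\<psi> ` nbhd v))) ^ r < \<tau>"]
        finite_nbhd[OF v] card_Diff_subset[OF _ nbhd_subset[OF v]]
      by (simp add: card_nbhd)
    then show ?thesis
      using \<Gamma>(2)[OF that] by (simp add: mult_right_mono power_mono)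
  qed
  then have "(\<Sum>x\<in>X. real (card {\<phi> \<in> V2 \<rightarrow>\<^sub>E C x. real (card (common_nbhd (\<phi> ` nbhd v))) ^ r < \<tau>}))
      \<le> \<Gamma> ^ (s - degree E v) * (\<Sum>x\<in>X. real (card (?sparse x)))"
    by (simp add: sum_distrib_left sum_mono)
  also have "(\<Sum>x\<in>X. real (card (?sparse x))) \<le> (\<Sum>x\<in>tuples. real (card (?sparse x)))"
    using X finite_tuples by (intro sum_mono2) auto
  also have "\<dots> \<le> real N ^ degree E v * \<tau>"
    using sum_card_sparse_maps_le[OF finite_nbhd[OF v] \<tau>] by (simp add: card_nbhd)
  finally show ?thesis using \<Gamma>(1) by (simp add: mult.assoc mult_left_mono)
qed

definition good_maps :: "('a \<Rightarrow> real) \<Rightarrow> (nat \<Rightarrow> 'b) \<Rightarrow> ('a \<Rightarrow> 'b) set" where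
  "good_maps \<tau> x = {\<phi> \<in> V2 \<rightarrow>\<^sub>E C x. \<forall>v\<in>W. \<tau> v \<le> real (card (common_nbhd (\<phi> ` nbhd v))) ^ r}"

lemma card_maps_le_good_bad:
  "real (card (C x)) ^ s \<le> real (card (good_maps \<tau> x))
    + (\<Sum>v\<in>W. real (card {\<phi> \<in> V2 \<rightarrow>\<^sub>E C x. real (card (common_nbhd (\<phi> ` nbhd v))) ^ r < \<tau> v}))"
proof -
  define bad where "bad v = {\<phi> \<in> V2 \<rightarrow>\<^sub>E C x. real (card (common_nbhd (\<phi> ` nbhd v))) ^ r < \<tau> v}" for v
  have "finite W" using finite_V1 by simp
  have "card (V2 \<rightarrow>\<^sub>E C x) \<le> card (good_maps \<tau> x \<union> (\<Union>v\<in>W. bad v))"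
    using finite_V2 finite_common_nbhd \<open>finite W\<close>
    by (intro card_mono) (auto simp: good_maps_def bad_def not_le finite_PiE)
  also have "\<dots> \<le> card (good_maps \<tau> x) + (\<Sum>v\<in>W. card (bad v))"
    using card_Un_le card_UN_le[OF \<open>finite W\<close>] add_left_mono order_trans by blast
  finally have "card (C x) ^ s \<le> card (good_maps \<tau> x) + (\<Sum>v\<in>W. card (bad v))"
    using finite_V2 by (simp add: card_PiE)
  then have "real (card (C x) ^ s) \<le> real (card (good_maps \<tau> x) + (\<Sum>v\<in>W. card (bad v)))"
    by (rule of_nat_mono)
  then show ?thesis by (simp add: bad_def)
qed

lemma sum_card_good_maps_ge:
  assumes X: "X \<subseteq> tuples" and \<Gamma>: "0 \<le> \<Gamma>" "\<And>x. x \<in> X \<Longrightarrow> real (card (C x)) \<le> \<Gamma>"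
    and \<tau>: "\<And>v. v \<in> W \<Longrightarrow> 0 \<le> \<tau> v"
      "\<And>v. v \<in> W \<Longrightarrow> \<Gamma> ^ (s - degree E v) * real N ^ degree E v * \<tau> v
        \<le> (\<Sum>x\<in>X. real (card (C x)) ^ s) / (2 * card W)"
  shows "(\<Sum>x\<in>X. real (card (C x)) ^ s) / 2 \<le> (\<Sum>x\<in>X. real (card (good_maps \<tau> x)))"
proof -
  define L where "L = (\<Sum>x\<in>X. real (card (C x)) ^ s)"
  define bad where "bad x v = {\<phi> \<in> V2 \<rightarrow>\<^sub>E C x. real (card (common_nbhd (\<phi> ` nbhd v))) ^ r < \<tau> v}" for x v
  have "(\<Sum>x\<in>X. real (card (bad x v))) \<le> L / (2 * card W)" if "v \<in> W" for v
    using sum_card_bad_maps_le[OF X _ \<tau>(1)[OF that] \<Gamma>, of v] \<tau>(2)[OF that] that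
    by (simp add: bad_def L_def)
  then have "(\<Sum>v\<in>W. \<Sum>x\<in>X. real (card (bad x v))) \<le> card W * (L / (2 * card W))"
    using sum_mono[of W _ "\<lambda>_. L / (2 * card W)"] by simp
  also have "\<dots> \<le> L / 2"
    using sum_nonneg[of X "\<lambda>x. real (card (C x)) ^ s"] by (cases "card W = 0") (simp_all add: L_def)
  finally have "(\<Sum>v\<in>W. \<Sum>x\<in>X. real (card (bad x v))) \<le> L / 2" .
  moreover have "L \<le> (\<Sum>x\<in>X. real (card (good_maps \<tau> x)) + (\<Sum>v\<in>W. real (card (bad x v))))"
    unfolding L_def bad_def by (intro sum_mono card_maps_le_good_bad)
  then have "L \<le> (\<Sum>x\<in>X. real (card (good_maps \<tau> x))) + (\<Sum>v\<in>W. \<Sum>x\<in>X. real (card (bad x v)))"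
    by (simp only: sum.distrib sum.swap[of _ X W])
  ultimately show ?thesis unfolding L_def by linarith
qed

lemma hom_count_ge_good_maps:
  assumes X: "X \<subseteq> tuples" and \<tau>: "\<And>v. v \<in> W \<Longrightarrow> 0 \<le> \<tau> v"
  shows "(\<Sum>x\<in>X. real (card (good_maps \<tau> x))) * (\<Prod>v\<in>W. \<tau> v) powr (1 / r)
    \<le> real (hom_count V E VG EG)"
proof -
  have "(\<Prod>v\<in>W. \<tau> v) powr (1 / r) \<le> (\<Prod>v\<in>W. real (card (common_nbhd (\<phi> ` nbhd v))))"
    if "\<phi> \<in> good_maps \<tau> x" for \<phi> x
  proof (rule root_le_of_le_power)
    have "(\<Prod>v\<in>W. \<tau> v) \<le> (\<Prod>v\<in>W. real (card (common_nbhd (\<phi> ` nbhd v))) ^ r)"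
      using that \<tau> by (intro prod_mono) (auto simp: good_maps_def)
    then show "(\<Prod>v\<in>W. \<tau> v) \<le> (\<Prod>v\<in>W. real (card (common_nbhd (\<phi> ` nbhd v)))) ^ r"
      by (simp add: prod_power_distrib)
  qed (use r \<tau> in \<open>auto intro: prod_nonneg\<close>)
  then have "(\<Sum>x\<in>X. real (card (good_maps \<tau> x))) * (\<Prod>v\<in>W. \<tau> v) powr (1 / r)
      \<le> (\<Sum>x\<in>X. \<Sum>\<phi>\<in>good_maps \<tau> x. \<Prod>v\<in>W. real (card (common_nbhd (\<phi> ` nbhd v))))"
    unfolding sum_distrib_right by (intro sum_mono) (simp add: sum_bounded_below)
  also have "\<dots> \<le> real (hom_count V E VG EG)"
    using hom_count_ge_extensions[OF X, of "good_maps \<tau>"]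
    by (simp add: good_maps_def flip: of_nat_sum of_nat_prod)
  finally show ?thesis .
qed

lemma hom_count_ge_threshold:
  assumes X: "X \<subseteq> tuples" and \<Gamma>: "0 \<le> \<Gamma>" "\<And>x. x \<in> X \<Longrightarrow> real (card (C x)) \<le> \<Gamma>"
    and \<tau>: "\<And>v. v \<in> W \<Longrightarrow> 0 \<le> \<tau> v"
      "\<And>v. v \<in> W \<Longrightarrow> \<Gamma> ^ (s - degree E v) * real N ^ degree E v * \<tau> v
        \<le> (\<Sum>x\<in>X. real (card (C x)) ^ s) / (2 * card W)"
  shows "(\<Sum>x\<in>X. real (card (C x)) ^ s) / 2 * (\<Prod>v\<in>W. \<tau> v) powr (1 / r)
    \<le> real (hom_count V E VG EG)"
proof -
  have "(\<Sum>x\<in>X. real (card (C x)) ^ s) / 2 \<le> (\<Sum>x\<in>X. real (card (good_maps \<tau> x)))"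
    by (rule sum_card_good_maps_ge) (use assms in auto)
  then show ?thesis
    using hom_count_ge_good_maps[of X \<tau>] assms by (meson mult_right_mono powr_ge_zero order_trans)
qed

lemma edge_count: "card (edge_set E) = r * s + (\<Sum>v\<in>W. degree E v)"
proof -
  let ?S = "SIGMA v:V1. nbhd v"
  let ?edge = "\<lambda>(v, w). {v, w}"
  have "?edge ` ?S = edge_set E"
  proof (intro equalityI subsetI)
    fix e assume "e \<in> ?edge ` ?S"
    then show "e \<in> edge_set E" by (auto simp: edge_set_def nbhd_def)
  next
    fix e assume "e \<in> edge_set E"
    then obtain x y where xy: "E x y" "e = {x, y}" by (auto simp: edge_set_def)
    then have "(x, y) \<in> ?S \<or> (y, x) \<in> ?S" using bip[OF xy(1)] E_sym by (auto simp: nbhd_def)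
    then show "e \<in> ?edge ` ?S" using xy by (auto simp: insert_commute)
  qed
  moreover have "inj_on ?edge ?S"
  proof (rule inj_onI)
    fix p q assume hp: "p \<in> ?S" and hq: "q \<in> ?S" and e: "?edge p = ?edge q"
    obtain v w v' w' where p: "p = (v, w)" and q: "q = (v', w')" by (cases p, cases q)
    have "v \<in> V1" "w \<in> V2" "v' \<in> V1" "w' \<in> V2" using hp hq nbhd_subset by (auto simp: p q)
    moreover have "{v, w} = {v', w'}" using e by (simp add: p q)
    ultimately show "p = q" using part(2) by (auto simp: p q doubleton_eq_iff)
  qed
  ultimately have "card (edge_set E) = card ?S" by (metis card_image)
  also have "\<dots> = (\<Sum>v\<in>V1. degree E v)"
    using finite_V1 finite_nbhd by (simp add: card_nbhd)
  also have "\<dots> = (\<Sum>v\<in>W. degree E v) + (\<Sum>v\<in>U. degree E v)"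
    using sum.subset_diff[OF U(1) finite_V1] .
  also have "(\<Sum>v\<in>U. degree E v) = r * s" using nbhd_U U by (simp flip: card_nbhd)
  finally show ?thesis by simp
qed

lemma card_V: "card V = r + card W + s"
proof -
  have "card V = card V1 + s" using card_Un_disjoint[OF finite_V1 finite_V2 part(2)] part(1) by simp
  moreover have "card W = card V1 - r" using U finite_U by (simp add: card_Diff_subset)
  moreover have "r \<le> card V1" using U finite_V1 card_mono by metis
  ultimately show ?thesis by simp
qed

definition excess :: nat where
  "excess = (\<Sum>v\<in>W. degree E v - d)"

definition band_exponent :: real where
  "band_exponent = real (s - d) + real excess / r"

text \<open>The summand \<open>+ 1\<close> keeps the base positive when \<open>W = {}\<close>: in Isabelle \<open>0 powr 0 = 0\<close>.\<close>

definition band_constant :: real where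
  "band_constant = 1 / 2 * (2 * (real (card W) + 1) * 2 ^ s) powr (- (card W / r))"

definition pigeonhole_constant :: real where
  "pigeonhole_constant = 2 powr (- (real d + 1) * band_exponent / real d)
    * (1 / (4 * real (r + card W))) powr (real (r + card W) / r)"

definition moment :: real where
  "moment = (\<Sum>x\<in>tuples. real (card (C x)) ^ d) / real N ^ (r + d)"

lemma prod_power_excess: "(\<Prod>v\<in>W. \<gamma> ^ (degree E v - d) * K) = K ^ card W * \<gamma> ^ excess"
  by (simp add: prod.distrib excess_def power_sum mult.commute)

lemma sum_power_s_ge_band:
  fixes \<gamma> :: real
  assumes \<gamma>: "\<gamma> > 0" and lower: "\<And>x. x \<in> X \<Longrightarrow> \<gamma> * N \<le> real (card (C x)) \<or> s = d"
  shows "(\<gamma> * N) ^ (s - d) * (\<Sum>x\<in>X. real (card (C x)) ^ d) \<le> (\<Sum>x\<in>X. real (card (C x)) ^ s)"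
  unfolding sum_distrib_left
proof (rule sum_mono)
  fix x assume "x \<in> X"
  then have "(\<gamma> * N) ^ (s - d) \<le> real (card (C x)) ^ (s - d)"
    using lower \<gamma> by (cases "s = d") (auto intro!: power_mono)
  then have "(\<gamma> * N) ^ (s - d) * real (card (C x)) ^ d \<le> real (card (C x)) ^ (s - d) * real (card (C x)) ^ d"
    by (rule mult_right_mono) simp
  also have "\<dots> = real (card (C x)) ^ s" using d_le_s by (simp flip: power_add)
  finally show "(\<gamma> * N) ^ (s - d) * real (card (C x)) ^ d \<le> real (card (C x)) ^ s" .
qed

lemma band_threshold_le:
  fixes \<gamma> e M L :: real
  assumes v: "v \<in> W" and \<gamma>: "\<gamma> > 0" and N: "N > 0" and e: "e \<ge> 0"
    and M: "2 * card W * 2 ^ s \<le> M" and L: "(\<gamma> * real N) ^ (s - d) * real N ^ (r + d) * e \<le> L"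
  shows "(2 * \<gamma> * real N) ^ (s - degree E v) * real N ^ degree E v * (\<gamma> ^ (degree E v - d) * real N ^ r * e / M)
    \<le> L / (2 * card W)"
proof -
  define i where "i = s - degree E v"
  define j where "j = degree E v - d"
  have "v \<in> V1" using v by simp
  then have ij: "s - d = i + j" "degree E v = j + d" using deg degree_le by (auto simp: i_def j_def)
  have w: "real (card W) \<ge> 1" using v finite_V1 by (simp add: Suc_le_eq card_gt_0_iff) blast
  have "(2::real) ^ i \<le> 2 ^ s" by (intro power_increasing) (auto simp: i_def)
  then have M': "2 * card W * 2 ^ i \<le> M"
    using mult_left_mono[of "(2::real) ^ i" "2 ^ s" "2 * card W"] M by simp
  have "0 < 2 * card W * (2::real) ^ i" using w by simp
  then have "(2 * \<gamma> * real N) ^ i * real N ^ degree E v * (\<gamma> ^ j * real N ^ r * e / M)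
      \<le> (2 * \<gamma> * real N) ^ i * real N ^ degree E v * (\<gamma> ^ j * real N ^ r * e / (2 * card W * 2 ^ i))"
    using \<gamma> N e M' by (intro mult_left_mono divide_left_mono) auto
  also have "\<dots> = (\<gamma> * real N) ^ (s - d) * real N ^ (r + d) * e / (2 * card W)"
    unfolding ij by (simp add: power_add power_mult_distrib)
  also have "\<dots> \<le> L / (2 * card W)"
    using L w by (intro divide_right_mono) auto
  finally show ?thesis by (simp add: i_def j_def)
qed

lemma hom_density_ge_band:
  fixes \<gamma> :: real
  assumes X: "X \<subseteq> tuples" and \<gamma>: "\<gamma> > 0" and N: "N > 0"
    and upper: "\<And>x. x \<in> X \<Longrightarrow> real (card (C x)) \<le> 2 * \<gamma> * real N"
    and lower: "\<And>x. x \<in> X \<Longrightarrow> \<gamma> * real N \<le> real (card (C x)) \<or> s = d"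
  shows "band_constant * \<gamma> powr band_exponent
      * ((\<Sum>x\<in>X. real (card (C x)) ^ d) / real N ^ (r + d)) powr (1 + card W / r)
    \<le> hom_density V E VG EG"
proof -
  define e where "e = (\<Sum>x\<in>X. real (card (C x)) ^ d) / real N ^ (r + d)"
  define M :: real where "M = 2 * (real (card W) + 1) * 2 ^ s"
  define L where "L = (\<Sum>x\<in>X. real (card (C x)) ^ s)"
  define \<tau> where "\<tau> v = \<gamma> ^ (degree E v - d) * real N ^ r * e / M" for v
  have "e \<ge> 0" by (simp add: e_def sum_nonneg)
  show ?thesis
  proof (cases "e = 0")
    case False
    have L: "(\<gamma> * real N) ^ (s - d) * real N ^ (r + d) * e \<le> L"
      using sum_power_s_ge_band[OF \<gamma> lower] N by (simp add: e_def L_def)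
    have "(2 * \<gamma> * real N) ^ (s - degree E v) * real N ^ degree E v * \<tau> v \<le> L / (2 * card W)"
      if "v \<in> W" for v
      unfolding \<tau>_def using band_threshold_le[OF that \<gamma> N \<open>e \<ge> 0\<close> _ L, of M]
      by (simp add: M_def)
    then have "L / 2 * (\<Prod>v\<in>W. \<tau> v) powr (1 / r) \<le> hom_count V E VG EG"
      unfolding L_def using \<gamma> \<open>e \<ge> 0\<close>
      by (intro hom_count_ge_threshold[OF X, of "2 * \<gamma> * real N" \<tau>]) (auto simp: \<tau>_def M_def upper)
    moreover have "(\<Prod>v\<in>W. \<tau> v) = (real N ^ r * e / M) ^ card W * \<gamma> ^ excess"
      using prod_power_excess[of \<gamma> "real N ^ r * e / M"] by (simp add: \<tau>_def mult.assoc)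
    moreover have "(\<gamma> * real N) ^ (s - d) * real N ^ (r + d) * e / 2 * (\<Prod>v\<in>W. \<tau> v) powr (1 / r)
        \<le> L / 2 * (\<Prod>v\<in>W. \<tau> v) powr (1 / r)"
      using L by (intro mult_right_mono divide_right_mono) auto
    ultimately have "(\<gamma> * real N) ^ (s - d) * real N ^ (r + d) * e / 2 * ((real N ^ r * e / M) ^ card W * \<gamma> ^ excess) powr (1 / r)
        \<le> hom_count V E VG EG"
      by simp
    then have "(\<gamma> * real N) ^ (s - d) * real N ^ (r + d) * e / 2 * ((real N ^ r * e / M) ^ card W * \<gamma> ^ excess) powr (1 / r)
        / real N ^ (r + card W + s) \<le> hom_density V E VG EG"
      unfolding hom_density_def card_V by (rule divide_right_mono) simp
    moreover have "0 < M" by (simp add: M_def)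
    then have "(\<gamma> * real N) ^ (s - d) * real N ^ (r + d) * e / 2 * ((real N ^ r * e / M) ^ card W * \<gamma> ^ excess) powr (1 / r)
        / real N ^ (r + card W + s)
      = 1 / 2 * M powr (- (card W / r)) * \<gamma> powr (real (s - d) + excess / r) * e powr (1 + card W / r)"
      using N \<gamma> False \<open>e \<ge> 0\<close> r d_le_s by (intro band_bound_normalise) auto
    ultimately show ?thesis
      unfolding band_constant_def e_def[symmetric] M_def[symmetric] band_exponent_def by linarith
  qed (unfold e_def[symmetric], simp add: hom_density_def band_constant_def)
qed

lemma excess_le: "real excess \<le> real (card W) * real s"
proof -
  have "excess \<le> (\<Sum>v\<in>W. s)"
    unfolding excess_def using degree_le by (intro sum_mono) (meson DiffD1 diff_le_self le_trans)
  then have "excess \<le> card W * s" by simp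
  then show ?thesis by (metis of_nat_le_iff of_nat_mult)
qed

lemma edge_exponent:
  "real (card (edge_set E)) / real (r * d)
    = real (r + card W) / r + band_exponent / d"
proof -
  have "(\<Sum>v\<in>W. degree E v) = excess + card W * d"
  proof -
    have "(\<Sum>v\<in>W. degree E v) = (\<Sum>v\<in>W. (degree E v - d) + d)"
      using deg by (intro sum.cong) auto
    then show ?thesis by (simp add: sum.distrib excess_def)
  qed
  then have "card (edge_set E) = r * s + excess + card W * d" by (simp add: edge_count)
  then show ?thesis using r d d_le_s by (simp add: band_exponent_def field_simps)
qed

lemma band_exponent_ge:
  assumes "band_exponent \<noteq> 0"
  shows "1 / r \<le> band_exponent"
proof (cases "s = d")
  case True
  then have "1 \<le> excess" using assms by (simp add: band_exponent_def)
  then show ?thesis using True r by (simp add: band_exponent_def divide_right_mono)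
next
  case False
  then have "1 \<le> real (s - d)" using d_le_s by simp
  moreover have "1 / r \<le> (1::real)" using r by simp
  ultimately have "1 / r \<le> real (s - d)" by linarith
  then show ?thesis by (simp add: band_exponent_def add_increasing2)
qed

lemma band_exponent_bounds: "0 \<le> band_exponent" "band_exponent \<le> real s + real (card W) * real s"
proof -
  have "real excess / r \<le> real excess" using r by (simp add: divide_le_eq mult_le_cancel_left1)
  then show "band_exponent \<le> real s + real (card W) * real s"
    using excess_le d_le_s by (simp add: band_exponent_def)
qed (simp add: band_exponent_def)

lemma hom_density_ge_moment_flat:
  assumes N: "N > 0" and flat: "band_exponent = 0"
  shows "band_constant * pigeonhole_constant * moment powr (real (r + card W) / r + band_exponent / d)
    \<le> hom_density V E VG EG"
proof -
  have "s = d" using flat d_le_s by (simp add: band_exponent_def add_nonneg_eq_0_iff)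
  then have "band_constant * (1/2) powr band_exponent * moment powr (1 + card W / r)
      \<le> hom_density V E VG EG"
    unfolding moment_def using N card_common_nbhd_le by (intro hom_density_ge_band) auto
  moreover have "pigeonhole_constant \<le> 1"
    using flat r by (simp add: pigeonhole_constant_def powr_divide ge_one_powr_ge_zero)
  then have "band_constant * pigeonhole_constant * moment powr (real (r + card W) / r)
      \<le> band_constant * moment powr (real (r + card W) / r)"
    by (intro mult_right_mono) (auto simp: band_constant_def mult_left_le)
  moreover have "1 + card W / r = real (r + card W) / r" using r by (simp add: field_simps)
  ultimately show ?thesis using flat by simp
qed

lemma exists_dense_band:
  assumes N: "N > 0" and \<mu>: "0 < moment" and "band_exponent \<noteq> 0"
  shows "\<exists>\<gamma>>0. pigeonhole_constant * moment powr (real (r + card W) / r + band_exponent / d)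
    \<le> \<gamma> powr band_exponent
      * ((\<Sum>x\<in>{x\<in>tuples. \<gamma> < card (C x) / N \<and> card (C x) / N \<le> 2 * \<gamma>}. real (card (C x)) ^ d)
         / real N ^ (r + d)) powr (real (r + card W) / r)"
proof -
  define c where "c = (\<lambda>x. real (card (C x)) / N)"
  have "band_mass tuples c d \<gamma>
    = (\<Sum>x\<in>{x\<in>tuples. \<gamma> < c x \<and> c x \<le> 2 * \<gamma>}. real (card (C x)) ^ d) / real N ^ (r + d)" for \<gamma>
    using N by (simp add: c_def band_mass_def card_PiE power_divide sum_divide_distrib[symmetric]
        power_add mult.commute)
  moreover have "moment = (\<Sum>x\<in>tuples. c x ^ d) / card tuples"
    using N by (simp add: c_def moment_def card_PiE power_divide sum_divide_distrib[symmetric]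
        power_add mult.commute)
  ultimately show ?thesis
    using dyadic_pigeonhole[of tuples c d moment "r + card W" "1 / r" band_exponent]
      finite_tuples card_common_nbhd_le N \<mu> d r band_exponent_ge[OF assms(3)]
    by (simp add: c_def pigeonhole_constant_def divide_le_eq)
qed

lemma hom_density_ge_moment:
  assumes N: "N > 0" and \<mu>: "0 < moment"
  shows "band_constant * pigeonhole_constant * moment powr (real (r + card W) / r + band_exponent / d)
    \<le> hom_density V E VG EG"
proof (cases "band_exponent = 0")
  case False
  then obtain \<gamma> where \<gamma>: "\<gamma> > 0" and dense:
    "pigeonhole_constant * moment powr (real (r + card W) / r + band_exponent / d)
      \<le> \<gamma> powr band_exponent
        * ((\<Sum>x\<in>{x\<in>tuples. \<gamma> < card (C x) / N \<and> card (C x) / N \<le> 2 * \<gamma>}. real (card (C x)) ^ d)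
           / real N ^ (r + d)) powr (real (r + card W) / r)"
    using exists_dense_band[OF N \<mu>] by blast
  let ?e = "(\<Sum>x\<in>{x\<in>tuples. \<gamma> < card (C x) / N \<and> card (C x) / N \<le> 2 * \<gamma>}. real (card (C x)) ^ d)
    / real N ^ (r + d)"
  have "1 + card W / r = real (r + card W) / r" using r by (simp add: field_simps)
  moreover have "band_constant * \<gamma> powr band_exponent * ?e powr (1 + card W / r) \<le> hom_density V E VG EG"
    using \<gamma> N by (intro hom_density_ge_band) (auto simp: field_simps)
  ultimately have band: "band_constant * (\<gamma> powr band_exponent * ?e powr (real (r + card W) / r))
      \<le> hom_density V E VG EG"
    by (simp only: mult.assoc)
  have "band_constant * pigeonhole_constant * moment powr (real (r + card W) / r + band_exponent / d)
      = band_constant * (pigeonhole_constant * moment powr (real (r + card W) / r + band_exponent / d))"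
    by (simp only: mult.assoc)
  also have "\<dots> \<le> band_constant * (\<gamma> powr band_exponent * ?e powr (real (r + card W) / r))"
    using dense by (rule mult_left_mono) (simp add: band_constant_def)
  also have "\<dots> \<le> hom_density V E VG EG" by (rule band)
  finally show ?thesis .
qed (use hom_density_ge_moment_flat[OF N] in blast)

lemma Kbip_density_le_moment:
  assumes "N > 0"
  shows "hom_density (Kbip_V r d) (Kbip_E r d) VG EG \<le> moment"
proof -
  have "real (hom_count (Kbip_V r d) (Kbip_E r d) VG EG) \<le> (\<Sum>x\<in>tuples. real (card (C x)) ^ d)"
    using of_nat_mono[OF hom_count_Kbip_le, where 'a = real] by simp
  then show ?thesis using assms by (simp add: moment_def hom_density_def card_Kbip_V divide_right_mono)
qed

end

theorem lemma2p3:
  fixes V :: "'a set" and E :: "'a \<Rightarrow> 'a \<Rightarrow> bool"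
    and V1 V2 U :: "'a set" and n m r d :: nat
    and VG :: "'b set" and EG :: "'b \<Rightarrow> 'b \<Rightarrow> bool"
  assumes H: "simple_graph V E"
    and part: "V1 \<union> V2 = V" "V1 \<inter> V2 = {}"
    and bip: "\<And>x y. E x y \<Longrightarrow> (x \<in> V1 \<and> y \<in> V2) \<or> (x \<in> V2 \<and> y \<in> V1)"
    and n: "n = card V" and m: "m = card (edge_set E)"
    and r: "r \<ge> 1" and U: "U \<subseteq> V1" "card U = r"
    and Ucomplete: "\<And>u v. u \<in> U \<Longrightarrow> v \<in> V2 \<Longrightarrow> E u v"
    and d: "d \<ge> 1" and deg: "\<And>v. v \<in> V1 \<Longrightarrow> degree E v \<ge> d"
    and G: "simple_graph VG EG"
  shows "hom_density V E VG EG \<ge>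
    (2 * real n) powr (- (2 * real n ^ 2)) *
    hom_density (Kbip_V r d) (Kbip_E r d) VG EG powr (real m / real (r * d))"
proof -
  interpret bipartite_complete_core V E V1 V2 U r d VG EG
    using assms by unfold_locales
  define p where "p = hom_density (Kbip_V r d) (Kbip_E r d) VG EG"
  show ?thesis
  proof (cases "p = 0")
    case False
    then have N: "N > 0" using r by (auto simp: p_def hom_density_def card_Kbip_V)
    have "0 < p" "p \<le> moment"
      using False Kbip_density_le_moment[OF N] by (auto simp: p_def hom_density_def)
    then have "p powr (real m / real (r * d)) \<le> moment powr (real (r + card W) / r + band_exponent / d)"
      unfolding m edge_exponent using band_exponent_bounds(1) by (intro powr_mono2) auto
    moreover have "(2 * real n) powr (- (2 * real n ^ 2)) \<le> band_constant * pigeonhole_constant"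
      unfolding n card_V band_constant_def pigeonhole_constant_def
      using r d d_le_s band_exponent_bounds by (intro constant_bound) auto
    ultimately have "(2 * real n) powr (- (2 * real n ^ 2)) * p powr (real m / real (r * d))
        \<le> band_constant * pigeonhole_constant * moment powr (real (r + card W) / r + band_exponent / d)"
      by (intro mult_mono) (auto simp: band_constant_def pigeonhole_constant_def)
    also have "\<dots> \<le> hom_density V E VG EG"
      using hom_density_ge_moment[OF N] \<open>0 < p\<close> \<open>p \<le> moment\<close> by simp
    finally show ?thesis by (simp add: p_def)
  qed (unfold p_def[symmetric], simp add: hom_density_def)
qed

end
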